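(* Let $d\ge1$. Among all spherical $d$-simplices on $S^d$ with circumradius $R'$ and $\cos R'<1/\sqrt{d+1}$ that have all their vertices on their circumsphere, the regular simplex has minimal vertex diameter.
   Context: $S^d$ is the unit sphere in $\mathbb{R}^{d+1}$ and $\angle(x,y)=\arccos(x^Ty)$ is the spherical distance. A spherical $d$-simplex is $\mathrm{co}\{a_1,\dots,a_{d+1}\}=\{\sum\lambda_ia_i/\|\sum\lambda_ia_i\|:\lambda_i\ge0,\text{ not all }0\}$ with $a_1,\dots,a_{d+1}\in S^d$ linearly independent. It is regular if all $\angle(a_i,a_j)$, $i\ne j$, are equal. The circumradius $R'$ and circumcenter $C$ of a set are the radius and center of the smallest spherical cap $\{y\in S^d:\angle(C,y)\le\rho\}$ containing it; the circumsphere is the boundary of this cap. The vertex diameter $D_v$ of the simplex $\mathrm{co}\{a_1,\dots,a_{d+1}\}$ is defined as follows. For each $i$, let $a_i'$ be the intersection of the great circle through $a_i$ and $C$ with $\mathrm{co}\{a_1,\dots,a_{i-1},a_{i+1},\dots,a_{d+1}\}$. Then $D_v=\max_i\angle(a_i,a_i')$. *)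

theory Defs
  imports "HOL-Analysis.Analysis"
begin

text \<open>The ambient space R^(d+1) is real^'n with CARD('n) = d+1; the unit sphere S^d is
  sphere 0 1.  A spherical d-simplex is given by its d+1 vertices, indexed by the
  finite type 'n itself.\<close>

definition sangle :: "real^'n \<Rightarrow> real^'n \<Rightarrow> real" where
  "sangle x y = arccos (x \<bullet> y)"

definition sco :: "('i \<Rightarrow> real^'n) \<Rightarrow> 'i set \<Rightarrow> (real^'n) set" where
  "sco a I = {(\<Sum>i\<in>I. l i *\<^sub>R a i) /\<^sub>R norm (\<Sum>i\<in>I. l i *\<^sub>R a i) | l.
                 (\<forall>i\<in>I. 0 \<le> l i) \<and> (\<exists>i\<in>I. l i \<noteq> 0)}"

definition spherical_simplex :: "('n::finite \<Rightarrow> real^'n) \<Rightarrow> bool" where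
  "spherical_simplex a \<longleftrightarrow> (\<forall>i. a i \<in> sphere 0 1) \<and> inj a \<and> independent (range a)"

definition regular_simplex :: "('n::finite \<Rightarrow> real^'n) \<Rightarrow> bool" where
  "regular_simplex a \<longleftrightarrow> spherical_simplex a \<and>
     (\<forall>i j k l. i \<noteq> j \<longrightarrow> k \<noteq> l \<longrightarrow> sangle (a i) (a j) = sangle (a k) (a l))"

definition scap :: "real^'n \<Rightarrow> real \<Rightarrow> (real^'n) set" where
  "scap C \<rho> = {y \<in> sphere 0 1. sangle C y \<le> \<rho>}"

definition circumradius :: "(real^'n) set \<Rightarrow> real" where
  "circumradius S = Inf {\<rho>. \<exists>C\<in>sphere 0 1. S \<subseteq> scap C \<rho>}"

text \<open>Center of a smallest cap (unique for spherical simplices).\<close>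
definition circumcenter :: "(real^'n) set \<Rightarrow> real^'n" where
  "circumcenter S = (SOME C. C \<in> sphere 0 1 \<and> S \<subseteq> scap C (circumradius S))"

definition vertices_on_circumsphere :: "('n::finite \<Rightarrow> real^'n) \<Rightarrow> bool" where
  "vertices_on_circumsphere a \<longleftrightarrow>
     (\<forall>i. sangle (circumcenter (sco a UNIV)) (a i) = circumradius (sco a UNIV))"

definition great_circle :: "real^'n \<Rightarrow> real^'n \<Rightarrow> (real^'n) set" where
  "great_circle x y = sphere 0 1 \<inter> span {x, y}"

definition opp_point :: "('n::finite \<Rightarrow> real^'n) \<Rightarrow> 'n \<Rightarrow> real^'n" where
  "opp_point a i = (THE p. p \<in> great_circle (a i) (circumcenter (sco a UNIV))
                            \<and> p \<in> sco a (UNIV - {i}))"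

definition vertex_diameter :: "('n::finite \<Rightarrow> real^'n) \<Rightarrow> real" where
  "vertex_diameter a = Max (range (\<lambda>i. sangle (a i) (opp_point a i)))"

end

theory Submission
  imports Defs
begin

text \<open>Let \<open>C\<close> be the circumcentre, \<open>\<gamma> = cos R'\<close>, and write \<open>C = \<Sum> l\<^sub>i a\<^sub>i\<close>.
  Minimality of the circumcap forces all \<open>l\<^sub>i \<ge> 0\<close>, and \<open>C \<bullet> a\<^sub>i = \<gamma>\<close> together with
  \<open>C \<bullet> C = 1\<close> gives \<open>\<gamma> \<Sum> l\<^sub>i = 1\<close>. The point opposite \<open>a\<^sub>i\<close> is the normalisation of
  \<open>C - l\<^sub>i a\<^sub>i\<close>, so its angle to \<open>a\<^sub>i\<close> depends only on \<open>\<gamma>\<close> and \<open>l\<^sub>i\<close> and increases with \<open>l\<^sub>i\<close>.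
  Hence the vertex diameter is governed by the largest coordinate, which is at least the mean
  \<open>1 / ((d+1) \<gamma>)\<close>; for the regular simplex every coordinate equals this mean.\<close>

lemma independent_family_span_UNIV:
  fixes a :: "'n::finite \<Rightarrow> real^'n"
  assumes "inj a" "independent (range a)"
  shows "span (range a) = UNIV"
proof -
  have "dim (UNIV :: (real^'n) set) \<le> card (range a)"
    using \<open>inj a\<close> by (simp add: card_image)
  then have "UNIV \<subseteq> span (range a)"
    by (rule card_ge_dim_independent[OF subset_UNIV \<open>independent (range a)\<close>])
  then show ?thesis by auto
qed

lemma independent_family_combination:
  fixes a :: "'n::finite \<Rightarrow> real^'n"
  assumes "inj a" "independent (range a)"
  obtains l where "x = (\<Sum>j\<in>UNIV. l j *\<^sub>R a j)"
proof -
  have "x \<in> span (range a)"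
    using independent_family_span_UNIV[OF assms] by auto
  then obtain u where "x = (\<Sum>v\<in>range a. u v *\<^sub>R v)"
    using span_finite[of "range a"] by auto
  also have "\<dots> = (\<Sum>j\<in>UNIV. u (a j) *\<^sub>R a j)"
    using sum.reindex[OF \<open>inj a\<close>, of "\<lambda>v. u v *\<^sub>R v"] by simp
  finally show thesis by (rule that)
qed

lemma independent_family_combination_eq_0:
  fixes a :: "'i::finite \<Rightarrow> 'a::real_vector"
  assumes "inj a" "independent (range a)" "(\<Sum>j\<in>UNIV. m j *\<^sub>R a j) = 0"
  shows "m j = 0"
proof (rule ccontr)
  assume "m j \<noteq> 0"
  let ?u = "\<lambda>v. m (inv a v)"
  have "(\<Sum>v\<in>range a. ?u v *\<^sub>R v) = (\<Sum>j\<in>UNIV. m j *\<^sub>R a j)"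
    using sum.reindex[OF \<open>inj a\<close>, of "\<lambda>v. ?u v *\<^sub>R v"] \<open>inj a\<close> by simp
  moreover have "\<exists>v\<in>range a. ?u v \<noteq> 0"
    using \<open>m j \<noteq> 0\<close> \<open>inj a\<close> by (intro bexI[of _ "a j"]) auto
  ultimately have "dependent (range a)"
    using dependent_finite[of "range a"] assms(3) by auto
  with assms(2) show False by simp
qed

lemma independent_family_prescribed_inner:
  fixes a :: "'n::finite \<Rightarrow> real^'n"
  assumes "inj a" "independent (range a)"
  obtains v where "\<And>j. v \<bullet> a j = m j"
proof -
  let ?L = "\<lambda>x::real^'n. (\<chi> j. x \<bullet> a j) :: real^'n"
  have lin: "linear ?L"
    by (intro linearI) (auto simp: vec_eq_iff inner_add_left)
  have "inj ?L"
  proof (rule linear_injective_0[OF lin, THEN iffD2], intro allI impI)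
    fix x assume "?L x = 0"
    then have orth: "\<And>j. x \<bullet> a j = 0" by (simp add: vec_eq_iff)
    obtain l where l: "x = (\<Sum>j\<in>UNIV. l j *\<^sub>R a j)"
      using independent_family_combination[OF assms] .
    have "x \<bullet> x = (\<Sum>j\<in>UNIV. l j * (x \<bullet> a j))"
      by (subst (2) l) (simp add: inner_sum_right)
    with orth show "x = 0" by simp
  qed
  then have "surj ?L"
    by (rule linear_injective_imp_surjective[OF lin _ refl])
  then have "\<exists>v. (\<chi> j. m j) = ?L v"
    by (rule surjD)
  then obtain v where "(\<chi> j. m j) = ?L v"
    by (elim exE)
  then show thesis
    by (intro that) (simp add: vec_eq_iff)
qed

lemma inner_sum_biorthogonal:
  assumes "\<And>k. u \<bullet> a k = (if k = j then 1 else 0)" "finite J"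
  shows "u \<bullet> (\<Sum>k\<in>J. c k *\<^sub>R a k) = (if j \<in> J then c j else 0)"
proof -
  have "u \<bullet> (\<Sum>k\<in>J. c k *\<^sub>R a k) = (\<Sum>k\<in>J. c k * (u \<bullet> a k))"
    by (simp add: inner_sum_right)
  also have "\<dots> = (\<Sum>k\<in>J. if k = j then c j else 0)"
    by (intro sum.cong) (auto simp: assms(1))
  finally show ?thesis
    using assms(2) by (simp add: sum.delta')
qed

lemma inner_unit_bounds:
  fixes x y :: "'a::real_inner"
  assumes "norm x = 1" "norm y = 1"
  shows "-1 \<le> x \<bullet> y" "x \<bullet> y \<le> 1"
  using Cauchy_Schwarz_ineq2[of x y] assms by auto

lemma spherical_simplexD:
  assumes "spherical_simplex a"
  shows "norm (a i) = 1" "inj a" "independent (range a)"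
  using assms unfolding spherical_simplex_def by auto

lemma sangle_nonneg:
  fixes x y :: "real^'n"
  assumes "norm x = 1" "norm y = 1"
  shows "0 \<le> sangle x y"
  unfolding sangle_def using inner_unit_bounds[OF assms] by (intro arccos_lbound) auto

lemma scap_mono: "\<rho> \<le> \<rho>' \<Longrightarrow> scap C \<rho> \<subseteq> scap C \<rho>'"
  unfolding scap_def by auto

lemma sangle_commute: "sangle x y = sangle y x"
  unfolding sangle_def by (simp add: inner_commute)

lemma continuous_on_sangle:
  fixes y :: "real^'n"
  assumes "norm y = 1"
  shows "continuous_on (sphere 0 1) (\<lambda>C. sangle C y)"
  unfolding sangle_def
proof (rule continuous_on_compose2[OF continuous_on_arccos'])
  show "continuous_on (sphere 0 1) (\<lambda>C. C \<bullet> y)"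
    by (intro continuous_intros)
  show "(\<lambda>C. C \<bullet> y) ` sphere 0 1 \<subseteq> {-1..1}"
    using inner_unit_bounds[OF _ assms] by auto
qed

lemma closed_cap_centers:
  fixes S :: "(real^'n) set"
  assumes "S \<subseteq> sphere 0 1"
  shows "closed {C \<in> sphere 0 1. S \<subseteq> scap C \<rho>}"
proof -
  have "{C \<in> sphere 0 1. S \<subseteq> scap C \<rho>}
      = sphere 0 1 \<inter> (\<Inter>y\<in>S. {C \<in> sphere 0 1. sangle C y \<le> \<rho>})"
    using assms unfolding scap_def by (auto simp: sangle_commute)
  also have "closed \<dots>"
    using assms by (intro closed_Int closed_INT ballI continuous_on_closed_Collect_le
        continuous_on_sangle continuous_on_const) auto
  finally show ?thesis .
qed

lemma bdd_below_cap_radii: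
  fixes S :: "(real^'n) set"
  assumes "S \<subseteq> sphere 0 1" "S \<noteq> {}"
  shows "bdd_below {\<rho>. \<exists>C\<in>sphere 0 1. S \<subseteq> scap C \<rho>}"
proof (rule bdd_belowI)
  fix \<rho> assume "\<rho> \<in> {\<rho>. \<exists>C\<in>sphere 0 1. S \<subseteq> scap C \<rho>}"
  then obtain C where C: "C \<in> sphere 0 1" "S \<subseteq> scap C \<rho>" by auto
  obtain y where "y \<in> S" using assms by auto
  with C assms(1) show "0 \<le> \<rho>"
    unfolding scap_def using sangle_nonneg[of C y] by force
qed

lemma circumradius_le:
  fixes S :: "(real^'n) set"
  assumes "S \<subseteq> sphere 0 1" "S \<noteq> {}" "C \<in> sphere 0 1" "S \<subseteq> scap C \<rho>"
  shows "circumradius S \<le> \<rho>"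
  unfolding circumradius_def using assms by (intro cInf_lower[OF _ bdd_below_cap_radii]) auto

text \<open>The centres of caps of radius \<open>circumradius S + 1/(k+1)\<close> form a decreasing sequence
  of nonempty compact sets; any common point is the centre of a cap of radius \<open>circumradius S\<close>.\<close>
lemma circumradius_attained:
  fixes S :: "(real^'n) set"
  assumes S: "S \<subseteq> sphere 0 1" "S \<noteq> {}"
  obtains C where "C \<in> sphere 0 1" "S \<subseteq> scap C (circumradius S)"
proof -
  define R where "R = circumradius S"
  define P where "P = {\<rho>. \<exists>C\<in>sphere 0 1. S \<subseteq> scap C \<rho>}"
  define centers where "centers k = {C \<in> sphere 0 1. S \<subseteq> scap C (R + inverse (Suc k))}" for k
  obtain y0 where y0: "y0 \<in> S" using S by auto
  have "S \<subseteq> scap y0 pi"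
    using S y0 unfolding scap_def sangle_def by (auto intro!: arccos_ubound inner_unit_bounds)
  then have "P \<noteq> {}"
    using S y0 unfolding P_def by blast
  have "centers k \<noteq> {}" for k
  proof -
    have "Inf P < R + inverse (Suc k)"
      unfolding R_def P_def circumradius_def by simp
    then obtain \<rho> C where "\<rho> < R + inverse (Suc k)" "C \<in> sphere 0 1" "S \<subseteq> scap C \<rho>"
      using cInf_less_iff[OF \<open>P \<noteq> {}\<close>] bdd_below_cap_radii[OF S] unfolding P_def by auto
    then show ?thesis
      unfolding centers_def using scap_mono[of \<rho> "R + inverse (Suc k)" C] by auto
  qed
  moreover have "centers n \<subseteq> centers m" if "m \<le> n" for m n
  proof -
    have "inverse (real (Suc n)) \<le> inverse (real (Suc m))"
      using that by (intro le_imp_inverse_le) auto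
    then show ?thesis
      unfolding centers_def using scap_mono[OF add_left_mono] by blast
  qed
  moreover have "closed (centers k)" for k
    unfolding centers_def using closed_cap_centers[OF S(1)] .
  moreover have "bounded (centers 0)"
    by (rule bounded_subset[OF bounded_sphere[of 0 1]]) (auto simp: centers_def)
  ultimately obtain C where C: "\<And>k. C \<in> centers k"
    using bounded_closed_nest by metis
  have "sangle C y \<le> R" if "y \<in> S" for y
  proof (rule field_le_epsilon)
    fix e :: real assume "0 < e"
    then obtain k where "inverse (Suc k) < e"
      using reals_Archimedean by blast
    with C[of k] \<open>y \<in> S\<close> show "sangle C y \<le> R + e"
      unfolding centers_def scap_def by fastforce
  qed
  then show thesis
    using C[of 0] S(1) unfolding centers_def R_def by (intro that) (auto simp: scap_def)
qed

lemma sco_subset_sphere: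
  assumes "spherical_simplex a"
  shows "sco a UNIV \<subseteq> sphere 0 1"
proof
  fix y assume "y \<in> sco a UNIV"
  then obtain l where y: "y = (\<Sum>i\<in>UNIV. l i *\<^sub>R a i) /\<^sub>R norm (\<Sum>i\<in>UNIV. l i *\<^sub>R a i)"
    and "\<exists>i. l i \<noteq> 0"
    unfolding sco_def by auto
  then have "(\<Sum>i\<in>UNIV. l i *\<^sub>R a i) \<noteq> 0"
    using independent_family_combination_eq_0[OF spherical_simplexD(2,3)[OF assms]] by blast
  with y show "y \<in> sphere 0 1" by simp
qed

lemma vertex_in_sco:
  assumes "spherical_simplex a"
  shows "a i \<in> sco a UNIV"
proof -
  have "(\<Sum>j\<in>UNIV. (if j = i then 1 else 0) *\<^sub>R a j) = a i"
    by (simp add: if_distrib[of "\<lambda>t. t *\<^sub>R _"] cong: if_cong)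
  with spherical_simplexD(1)[OF assms, of i] show ?thesis
    unfolding sco_def by (intro CollectI exI[of _ "\<lambda>j. if j = i then 1 else 0"]) auto
qed

text \<open>The norm of a nonnegative combination of unit vectors is at most the sum of its coefficients.\<close>
lemma sco_subset_scap:
  assumes ss: "spherical_simplex a" and C: "norm C = 1" and "0 < g"
    and g: "\<And>j. g \<le> C \<bullet> a j"
  shows "sco a UNIV \<subseteq> scap C (arccos g)"
proof
  fix y assume y_sco: "y \<in> sco a UNIV"
  then obtain l where y: "y = (\<Sum>i\<in>UNIV. l i *\<^sub>R a i) /\<^sub>R norm (\<Sum>i\<in>UNIV. l i *\<^sub>R a i)"
    and l: "\<And>i. 0 \<le> l i"
    unfolding sco_def by auto
  define s where "s = (\<Sum>i\<in>UNIV. l i *\<^sub>R a i)"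
  have "norm s \<le> (\<Sum>i\<in>UNIV. norm (l i *\<^sub>R a i))"
    unfolding s_def by (rule norm_sum)
  also have "\<dots> = sum l UNIV"
    using l spherical_simplexD(1)[OF ss] by simp
  finally have "g * norm s \<le> g * sum l UNIV"
    using \<open>0 < g\<close> by simp
  also have "\<dots> = (\<Sum>i\<in>UNIV. l i * g)"
    by (simp add: sum_distrib_left mult.commute)
  also have "\<dots> \<le> (\<Sum>i\<in>UNIV. l i * (C \<bullet> a i))"
    using l g by (intro sum_mono mult_left_mono) auto
  also have "\<dots> = C \<bullet> s"
    unfolding s_def by (simp add: inner_sum_right)
  finally have "g \<le> C \<bullet> y"
    using y_sco sco_subset_sphere[OF ss] \<open>0 < g\<close> unfolding y s_def[symmetric]
    by (cases "s = 0") (auto simp: field_simps)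
  moreover have "norm y = 1"
    using y_sco sco_subset_sphere[OF ss] by auto
  ultimately show "y \<in> scap C (arccos g)"
    unfolding scap_def sangle_def using \<open>0 < g\<close> inner_unit_bounds[OF C]
    by (auto intro: arccos_le_arccos)
qed

lemma circumradius_sco_le_arccos:
  assumes "spherical_simplex a" "norm C = 1" "0 < g" "\<And>j. g \<le> C \<bullet> a j"
  shows "circumradius (sco a UNIV) \<le> arccos g"
  by (rule circumradius_le[OF sco_subset_sphere[OF assms(1)] _ _ sco_subset_scap[OF assms]])
    (use assms vertex_in_sco[OF assms(1)] in auto)

lemma norm_circumcenter_sco:
  assumes "spherical_simplex a"
  shows "norm (circumcenter (sco a UNIV)) = 1"
proof -
  let ?P = "\<lambda>C. C \<in> sphere 0 1 \<and> sco a UNIV \<subseteq> scap C (circumradius (sco a UNIV))"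
  have "sco a UNIV \<noteq> {}"
    using vertex_in_sco[OF assms] by blast
  then obtain C where "?P C"
    using circumradius_attained[OF sco_subset_sphere[OF assms]] by blast
  then have "?P (circumcenter (sco a UNIV))"
    unfolding circumcenter_def by (rule someI[where P = ?P])
  then show ?thesis by simp
qed

lemma circumcenter_inner_vertex:
  assumes "spherical_simplex a" "vertices_on_circumsphere a"
  shows "circumcenter (sco a UNIV) \<bullet> a i = cos (circumradius (sco a UNIV))"
proof -
  have "arccos (circumcenter (sco a UNIV) \<bullet> a i) = circumradius (sco a UNIV)"
    using assms(2) unfolding vertices_on_circumsphere_def sangle_def by simp
  with inner_unit_bounds[OF norm_circumcenter_sco spherical_simplexD(1), OF assms(1,1)]
  show ?thesis by (metis cos_arccos)
qed

lemma cos_circumradius_ge: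
  assumes ss: "spherical_simplex a" and voc: "vertices_on_circumsphere a"
    and C: "norm C = 1" and "0 < g" and g: "\<And>j. g \<le> C \<bullet> a j"
  shows "g \<le> cos (circumradius (sco a UNIV))"
proof -
  define R where "R = circumradius (sco a UNIV)"
  define C0 where "C0 = circumcenter (sco a UNIV)"
  fix i
  have "R = arccos (C0 \<bullet> a i)"
    using voc unfolding vertices_on_circumsphere_def sangle_def R_def C0_def by simp
  then have "0 \<le> R"
    using inner_unit_bounds[OF norm_circumcenter_sco spherical_simplexD(1), OF ss ss]
    unfolding C0_def by (simp add: arccos_lbound)
  have "g \<le> 1"
    using g[of i] inner_unit_bounds(2)[OF C spherical_simplexD(1)[OF ss, of i]] by linarith
  have "R \<le> arccos g"
    unfolding R_def by (rule circumradius_sco_le_arccos[OF ss C \<open>0 < g\<close> g])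
  moreover have "arccos g \<le> pi"
    using \<open>0 < g\<close> \<open>g \<le> 1\<close> by (intro arccos_ubound) auto
  ultimately have "cos (arccos g) \<le> cos R"
    using \<open>0 \<le> R\<close> by (intro cos_monotone_0_pi_le) auto
  then show ?thesis
    using \<open>0 < g\<close> \<open>g \<le> 1\<close> unfolding R_def by simp
qed

lemma cos_circumradius_pos:
  assumes ss: "spherical_simplex a" and voc: "vertices_on_circumsphere a"
  shows "0 < cos (circumradius (sco a UNIV))"
proof -
  obtain v where v: "\<And>j. v \<bullet> a j = 1"
    using independent_family_prescribed_inner[OF spherical_simplexD(2,3)[OF ss], where m = "\<lambda>_. 1"]
    by blast
  then have "v \<noteq> 0" by force
  have "1 / norm v \<le> cos (circumradius (sco a UNIV))"
    using \<open>v \<noteq> 0\<close> v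
    by (intro cos_circumradius_ge[OF ss voc, of "v /\<^sub>R norm v"]) (auto simp: divide_inverse)
  moreover have "0 < 1 / norm v"
    using \<open>v \<noteq> 0\<close> by simp
  ultimately show ?thesis by linarith
qed

text \<open>Pushing the centre along \<open>v\<close> moves it strictly inside the unit ball while increasing every
  inner product with the \<open>a j\<close>; renormalising increases them further.\<close>
lemma unit_center_improvable:
  fixes C v :: "'a::real_inner"
  assumes C: "norm C = 1" "\<And>j. C \<bullet> a j = \<gamma>" and "0 < \<gamma>"
    and v: "v \<bullet> C < 0" "\<And>j. 0 < v \<bullet> a j"
  obtains C' where "norm C' = 1" "\<And>j. \<gamma> < C' \<bullet> a j"
proof -
  have "v \<noteq> 0" using v(1) by auto
  define t where "t = - (v \<bullet> C) / (v \<bullet> v)"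
  have "0 < t"
    using v(1) \<open>v \<noteq> 0\<close> unfolding t_def by (simp add: divide_neg_pos)
  define D where "D = C + t *\<^sub>R v"
  have "D \<bullet> D = C \<bullet> C + 2 * t * (v \<bullet> C) + t\<^sup>2 * (v \<bullet> v)"
    unfolding D_def by (simp add: inner_add_left inner_add_right inner_commute power2_eq_square
        algebra_simps)
  also have "\<dots> = 1 - (v \<bullet> C)\<^sup>2 / (v \<bullet> v)"
    using C(1) \<open>v \<noteq> 0\<close> unfolding t_def
    by (simp add: power2_norm_eq_inner[symmetric] power2_eq_square field_simps)
  finally have "norm D < 1"
    using v(1) \<open>v \<noteq> 0\<close> by (simp add: norm_eq_sqrt_inner)
  have Da: "\<gamma> < D \<bullet> a j" for j
    using C(2) v(2)[of j] \<open>0 < t\<close> unfolding D_def by (simp add: inner_add_left)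
  then have "D \<noteq> 0"
    using \<open>0 < \<gamma>\<close> by (metis inner_zero_left order.asym)
  show thesis
  proof
    show "norm (D /\<^sub>R norm D) = 1"
      using \<open>D \<noteq> 0\<close> by simp
    fix j
    have "D \<bullet> a j \<le> (D /\<^sub>R norm D) \<bullet> a j"
      using \<open>norm D < 1\<close> \<open>D \<noteq> 0\<close> Da[of j] \<open>0 < \<gamma>\<close> by (simp add: field_simps)
    with Da[of j] show "\<gamma> < (D /\<^sub>R norm D) \<bullet> a j" by linarith
  qed
qed

text \<open>The circumcentre lies in the simplex: a negative coordinate \<open>l k\<close> would allow a direction
  \<open>v\<close> with \<open>v \<bullet> C < 0\<close> and \<open>v \<bullet> a j > 0\<close>, contradicting minimality of the circumcap.\<close>
lemma circumcenter_coeffs_nonneg: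
  assumes ss: "spherical_simplex a" and voc: "vertices_on_circumsphere a"
    and rep: "circumcenter (sco a UNIV) = (\<Sum>j\<in>UNIV. l j *\<^sub>R a j)"
  shows "0 \<le> l k"
proof (rule ccontr)
  assume "\<not> 0 \<le> l k"
  define C where "C = circumcenter (sco a UNIV)"
  define \<gamma> where "\<gamma> = cos (circumradius (sco a UNIV))"
  define N where "N = (\<bar>sum l UNIV\<bar> + 1) / - l k"
  have "l k < 0"
    using \<open>\<not> 0 \<le> l k\<close> by simp
  then have "0 < N" and lN: "l k * N = - (\<bar>sum l UNIV\<bar> + 1)"
    unfolding N_def by (simp_all add: divide_pos_neg)
  obtain v where v: "\<And>j. v \<bullet> a j = 1 + (if j = k then N else 0)"
    using independent_family_prescribed_inner[OF spherical_simplexD(2,3)[OF ss],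
        where m = "\<lambda>j. 1 + (if j = k then N else 0)"] by blast
  have "v \<bullet> C = (\<Sum>j\<in>UNIV. l j + (if j = k then l k * N else 0))"
    unfolding C_def rep by (simp add: inner_sum_right v distrib_left if_distrib cong: if_cong)
  also have "\<dots> = sum l UNIV + l k * N"
    by (simp add: sum.distrib)
  finally have "v \<bullet> C < 0"
    using lN by linarith
  moreover have "0 < v \<bullet> a j" for j
    using \<open>0 < N\<close> by (simp add: v)
  ultimately obtain C' where C': "norm C' = 1" "\<And>j. \<gamma> < C' \<bullet> a j"
    using unit_center_improvable[of C a \<gamma> v] norm_circumcenter_sco[OF ss]
      circumcenter_inner_vertex[OF ss voc] cos_circumradius_pos[OF ss voc]
    unfolding C_def \<gamma>_def by blast
  define g where "g = Min (range (\<lambda>j. C' \<bullet> a j))"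
  have "g \<in> range (\<lambda>j. C' \<bullet> a j)"
    unfolding g_def by (intro Min_in) auto
  then have "\<gamma> < g"
    using C'(2) by auto
  moreover have "g \<le> \<gamma>"
  proof -
    have "0 < g"
      using \<open>\<gamma> < g\<close> cos_circumradius_pos[OF ss voc] unfolding \<gamma>_def by linarith
    moreover have "g \<le> C' \<bullet> a j" for j
      unfolding g_def by (intro Min_le) auto
    ultimately show ?thesis
      unfolding \<gamma>_def by (rule cos_circumradius_ge[OF ss voc C'(1)])
  qed
  ultimately show False by simp
qed

lemma equiangular_center_coeffs_sum:
  fixes a :: "'i::finite \<Rightarrow> 'a::real_inner"
  assumes "norm C = 1" "\<And>i. C \<bullet> a i = \<gamma>" "C = (\<Sum>j\<in>UNIV. l j *\<^sub>R a j)"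
  shows "\<gamma> * sum l UNIV = 1"
proof -
  have "C \<bullet> C = (\<Sum>j\<in>UNIV. l j * (C \<bullet> a j))"
    by (subst (2) assms(3)) (simp add: inner_sum_right)
  with assms(1,2) show ?thesis
    by (simp add: sum_distrib_left mult.commute power2_norm_eq_inner[symmetric])
qed

lemma biorthogonal_family_exists:
  fixes a :: "'n::finite \<Rightarrow> real^'n"
  assumes "inj a" "independent (range a)"
  obtains u where "\<And>k j. u k \<bullet> a j = (if j = k then 1 else 0)"
proof -
  have "\<exists>v. \<forall>j. v \<bullet> a j = (if j = k then 1 else 0)" for k
    using independent_family_prescribed_inner[OF assms, where m = "\<lambda>j. if j = k then 1 else 0"]
    by blast
  then show thesis
    using that by metis
qed

lemma inner_biorthogonal_sco:
  assumes u: "\<And>k j. u k \<bullet> a j = (if j = k then 1 else 0)" and "finite J" "p \<in> sco a J"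
  shows "\<And>k. k \<notin> J \<Longrightarrow> u k \<bullet> p = 0" and "\<exists>k\<in>J. 0 < u k \<bullet> p"
proof -
  obtain l where p: "p = (\<Sum>j\<in>J. l j *\<^sub>R a j) /\<^sub>R norm (\<Sum>j\<in>J. l j *\<^sub>R a j)"
    and l: "\<forall>j\<in>J. 0 \<le> l j" "\<exists>j\<in>J. l j \<noteq> 0"
    using \<open>p \<in> sco a J\<close> unfolding sco_def by blast
  define s where "s = (\<Sum>j\<in>J. l j *\<^sub>R a j)"
  have us: "u k \<bullet> p = (if k \<in> J then l k / norm s else 0)" for k
    unfolding p s_def[symmetric] using inner_sum_biorthogonal[OF u \<open>finite J\<close>, of k l]
    by (simp add: s_def divide_inverse mult.commute)
  then show "\<And>k. k \<notin> J \<Longrightarrow> u k \<bullet> p = 0" by simp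
  obtain j where "j \<in> J" "0 < l j"
    using l by force
  moreover have "s \<noteq> 0"
    using inner_sum_biorthogonal[OF u \<open>finite J\<close>, of j l] \<open>j \<in> J\<close> \<open>0 < l j\<close>
    unfolding s_def by force
  ultimately show "\<exists>k\<in>J. 0 < u k \<bullet> p"
    using us by (intro bexI[of _ j]) auto
qed

lemma opp_point_eq:
  fixes a :: "'n::finite \<Rightarrow> real^'n"
  assumes ss: "spherical_simplex a"
    and rep: "circumcenter (sco a UNIV) = (\<Sum>j\<in>UNIV. l j *\<^sub>R a j)"
    and l: "\<And>j. 0 \<le> l j" and "j0 \<noteq> i" "l j0 \<noteq> 0"
  defines "d \<equiv> circumcenter (sco a UNIV) - l i *\<^sub>R a i"
  shows "opp_point a i = d /\<^sub>R norm d"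
proof -
  define C where "C = circumcenter (sco a UNIV)"
  have d: "d = (\<Sum>j\<in>UNIV - {i}. l j *\<^sub>R a j)"
    unfolding d_def rep by (simp add: sum.remove[of UNIV i])
  obtain u where u: "\<And>k j. u k \<bullet> a j = (if j = k then 1 else 0)"
    using biorthogonal_family_exists[OF spherical_simplexD(2,3)[OF ss]] by blast
  have ud: "u k \<bullet> d = (if k = i then 0 else l k)" for k
    unfolding d using inner_sum_biorthogonal[OF u] by simp
  then have "d \<noteq> 0"
    using \<open>j0 \<noteq> i\<close> \<open>l j0 \<noteq> 0\<close> by (metis inner_zero_right)
  have "d \<in> span {a i, C}"
    unfolding d_def C_def by (intro span_diff span_scale span_base) auto
  then have in_circle: "d /\<^sub>R norm d \<in> great_circle (a i) C"
    using \<open>d \<noteq> 0\<close> unfolding great_circle_def by (auto intro: span_scale)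
  have in_facet: "d /\<^sub>R norm d \<in> sco a (UNIV - {i})"
    unfolding sco_def d using l \<open>j0 \<noteq> i\<close> \<open>l j0 \<noteq> 0\<close> by blast
  have unique: "p = d /\<^sub>R norm d" if "p \<in> great_circle (a i) C" "p \<in> sco a (UNIV - {i})" for p
  proof -
    obtain \<alpha> where "p - \<alpha> *\<^sub>R a i \<in> span {C}"
      using \<open>p \<in> great_circle (a i) C\<close> span_breakdown_eq[of p "a i" "{C}"]
      unfolding great_circle_def by auto
    then obtain \<beta> where "p - \<alpha> *\<^sub>R a i = \<beta> *\<^sub>R C"
      unfolding span_singleton by auto
    then have p: "p = (\<alpha> + \<beta> * l i) *\<^sub>R a i + \<beta> *\<^sub>R d"
      unfolding d_def C_def by (simp add: algebra_simps)
    have "u i \<bullet> p = 0"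
      using inner_biorthogonal_sco(1)[OF u _ \<open>p \<in> sco a (UNIV - {i})\<close>] by simp
    then have "p = \<beta> *\<^sub>R d"
      using p by (simp add: inner_add_right u ud)
    obtain j where "j \<noteq> i" "0 < u j \<bullet> p"
      using inner_biorthogonal_sco(2)[OF u _ \<open>p \<in> sco a (UNIV - {i})\<close>] by auto
    then have "0 < \<beta>"
      using \<open>p = \<beta> *\<^sub>R d\<close> ud[of j] l[of j] by (simp add: zero_less_mult_iff)
    moreover have "norm p = 1"
      using \<open>p \<in> great_circle (a i) C\<close> unfolding great_circle_def by simp
    ultimately show ?thesis
      using \<open>p = \<beta> *\<^sub>R d\<close> \<open>d \<noteq> 0\<close> by (simp add: field_simps)
  qed
  show ?thesis
    unfolding opp_point_def C_def[symmetric]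
    by (rule the_equality) (use in_circle in_facet unique in blast)+
qed

lemma inner_normalize_diff:
  fixes C x :: "'a::real_inner"
  assumes "norm C = 1" "norm x = 1" "C \<bullet> x = \<gamma>"
  shows "x \<bullet> ((C - t *\<^sub>R x) /\<^sub>R norm (C - t *\<^sub>R x)) = (\<gamma> - t) / sqrt ((\<gamma> - t)\<^sup>2 + (1 - \<gamma>\<^sup>2))"
proof -
  have CC: "C \<bullet> C = 1" and xx: "x \<bullet> x = 1"
    using assms(1,2) by (simp_all add: power2_norm_eq_inner[symmetric])
  have "(C - t *\<^sub>R x) \<bullet> (C - t *\<^sub>R x) = (\<gamma> - t)\<^sup>2 + (1 - \<gamma>\<^sup>2)"
    using assms(3) CC xx
    by (simp add: inner_diff_left inner_diff_right inner_commute power2_eq_square algebra_simps)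
  moreover have "x \<bullet> (C - t *\<^sub>R x) = \<gamma> - t"
    using assms(3) xx by (simp add: inner_diff_right inner_commute)
  ultimately show ?thesis
    by (simp add: norm_eq_sqrt_inner divide_inverse mult.commute)
qed

lemma combination_coeff_nonzero_other:
  fixes a :: "'i::finite \<Rightarrow> 'a::real_inner"
  assumes "norm C = 1" "norm (a i) = 1" "C = (\<Sum>j\<in>UNIV. l j *\<^sub>R a j)" "\<bar>C \<bullet> a i\<bar> < 1"
  obtains j where "j \<noteq> i" "l j \<noteq> 0"
proof -
  have "\<exists>j. j \<noteq> i \<and> l j \<noteq> 0"
  proof (rule ccontr)
    assume "\<not> ?thesis"
    then have "(\<Sum>j\<in>UNIV - {i}. l j *\<^sub>R a j) = 0"
      by (intro sum.neutral) auto
    then have "C = l i *\<^sub>R a i"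
      unfolding assms(3) by (subst sum.remove[of UNIV i]) auto
    with assms(1,2,4) show False
      by (simp add: power2_norm_eq_inner[symmetric])
  qed
  with that show thesis by blast
qed

text \<open>The angle at a vertex between the vertex and the opposite point, in terms of
  \<open>\<gamma> = cos R'\<close> and the barycentric coordinate \<open>t\<close> of the circumcentre at that vertex.\<close>
definition opp_angle :: "real \<Rightarrow> real \<Rightarrow> real" where
  "opp_angle \<gamma> t = arccos ((\<gamma> - t) / sqrt ((\<gamma> - t)\<^sup>2 + (1 - \<gamma>\<^sup>2)))"

lemma circumcenter_coordinates:
  assumes ss: "spherical_simplex a" and voc: "vertices_on_circumsphere a"
    and "cos (circumradius (sco a UNIV)) < 1"
  obtains l where "circumcenter (sco a UNIV) = (\<Sum>j\<in>UNIV. l j *\<^sub>R a j)"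
    and "cos (circumradius (sco a UNIV)) * sum l UNIV = 1"
    and "\<And>i. sangle (a i) (opp_point a i) = opp_angle (cos (circumradius (sco a UNIV))) (l i)"
proof -
  define C where "C = circumcenter (sco a UNIV)"
  define \<gamma> where "\<gamma> = cos (circumradius (sco a UNIV))"
  have C: "norm C = 1" "\<And>i. C \<bullet> a i = \<gamma>" and "0 < \<gamma>"
    using norm_circumcenter_sco[OF ss] circumcenter_inner_vertex[OF ss voc]
      cos_circumradius_pos[OF ss voc] unfolding C_def \<gamma>_def by auto
  obtain l where rep: "C = (\<Sum>j\<in>UNIV. l j *\<^sub>R a j)"
    using independent_family_combination[OF spherical_simplexD(2,3)[OF ss]] by blast
  have "sangle (a i) (opp_point a i) = opp_angle \<gamma> (l i)" for i
  proof -
    obtain j where "j \<noteq> i" "l j \<noteq> 0"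
      using combination_coeff_nonzero_other[OF C(1) spherical_simplexD(1)[OF ss] rep]
        C(2) \<open>0 < \<gamma>\<close> assms(3) unfolding \<gamma>_def by auto
    then have "opp_point a i = (C - l i *\<^sub>R a i) /\<^sub>R norm (C - l i *\<^sub>R a i)"
      using opp_point_eq[OF ss] circumcenter_coeffs_nonneg[OF ss voc] rep unfolding C_def
      by blast
    then show ?thesis
      unfolding sangle_def opp_angle_def
      using inner_normalize_diff[OF C(1) spherical_simplexD(1)[OF ss] C(2)] by simp
  qed
  moreover have "\<gamma> * sum l UNIV = 1"
    by (rule equiangular_center_coeffs_sum[OF C(1,2) rep])
  ultimately show thesis
    using that rep unfolding C_def \<gamma>_def by blast
qed

lemma divide_sqrt_square_add_mono:
  fixes u w \<kappa> :: real
  assumes "0 < \<kappa>" "u \<le> w"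
  shows "u / sqrt (u\<^sup>2 + \<kappa>) \<le> w / sqrt (w\<^sup>2 + \<kappa>)"
proof -
  have pos: "0 < sqrt (x\<^sup>2 + \<kappa>)" for x
    using \<open>0 < \<kappa>\<close> by (simp add: add_nonneg_pos)
  have nonneg_case: "x / sqrt (x\<^sup>2 + \<kappa>) \<le> y / sqrt (y\<^sup>2 + \<kappa>)" if "0 \<le> x" "x \<le> y" for x y
  proof -
    have "x\<^sup>2 \<le> y\<^sup>2"
      using that by (simp add: power_mono)
    then have "x\<^sup>2 * (y\<^sup>2 + \<kappa>) \<le> y\<^sup>2 * (x\<^sup>2 + \<kappa>)"
      using \<open>0 < \<kappa>\<close> by (simp add: algebra_simps)
    then have "sqrt (x\<^sup>2 * (y\<^sup>2 + \<kappa>)) \<le> sqrt (y\<^sup>2 * (x\<^sup>2 + \<kappa>))"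
      by simp
    then have "x * sqrt (y\<^sup>2 + \<kappa>) \<le> y * sqrt (x\<^sup>2 + \<kappa>)"
      using that by (simp add: real_sqrt_mult)
    then show ?thesis
      using pos by (simp add: divide_simps mult.commute)
  qed
  show ?thesis
  proof (cases "0 \<le> u")
    case True
    with nonneg_case assms(2) show ?thesis by blast
  next
    case False
    show ?thesis
    proof (cases "0 \<le> w")
      case True
      have "u / sqrt (u\<^sup>2 + \<kappa>) \<le> 0"
        using \<open>\<not> 0 \<le> u\<close> pos[of u] by (simp add: divide_nonpos_pos)
      moreover have "0 \<le> w / sqrt (w\<^sup>2 + \<kappa>)"
        using True pos[of w] by simp
      ultimately show ?thesis by linarith
    next
      case False
      with nonneg_case[of "-w" "-u"] assms(2) show ?thesis by simp
    qed
  qed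
qed

lemma divide_sqrt_square_add_bounds:
  fixes u \<kappa> :: real
  assumes "0 < \<kappa>"
  shows "-1 \<le> u / sqrt (u\<^sup>2 + \<kappa>)" "u / sqrt (u\<^sup>2 + \<kappa>) \<le> 1"
proof -
  have "\<bar>u\<bar> \<le> sqrt (u\<^sup>2 + \<kappa>)"
    using real_sqrt_le_mono[of "u\<^sup>2" "u\<^sup>2 + \<kappa>"] assms by simp
  moreover have "0 < sqrt (u\<^sup>2 + \<kappa>)"
    using assms by (simp add: add_nonneg_pos)
  ultimately show "-1 \<le> u / sqrt (u\<^sup>2 + \<kappa>)" "u / sqrt (u\<^sup>2 + \<kappa>) \<le> 1"
    by (simp_all add: divide_simps abs_le_iff)
qed

lemma opp_angle_mono:
  assumes "\<gamma>\<^sup>2 < 1" "s \<le> t"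
  shows "opp_angle \<gamma> s \<le> opp_angle \<gamma> t"
  unfolding opp_angle_def using assms
  by (intro arccos_le_arccos divide_sqrt_square_add_mono divide_sqrt_square_add_bounds) auto

lemma regular_simplex_inner_eq:
  assumes "regular_simplex b" "i \<noteq> j" "k \<noteq> m"
  shows "b i \<bullet> b j = b k \<bullet> b m"
proof -
  have "arccos (b i \<bullet> b j) = arccos (b k \<bullet> b m)"
    using assms unfolding regular_simplex_def sangle_def by blast
  moreover have "\<bar>b i \<bullet> b j\<bar> \<le> 1" "\<bar>b k \<bullet> b m\<bar> \<le> 1"
    using assms(1) inner_unit_bounds[OF spherical_simplexD(1) spherical_simplexD(1)]
    unfolding regular_simplex_def by (auto simp: abs_le_iff)
  ultimately show ?thesis
    using arccos_eq_iff by blast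
qed

lemma regular_simplex_equiangular_coeffs_eq:
  fixes b :: "'n::finite \<Rightarrow> real^'n"
  assumes reg: "regular_simplex b" and C: "\<And>j. C \<bullet> b j = \<gamma>"
    and rep: "C = (\<Sum>j\<in>UNIV. l j *\<^sub>R b j)"
  shows "l i = l j"
proof (cases "i = j")
  case False
  define c where "c = b i \<bullet> b j"
  have ss: "spherical_simplex b"
    using reg unfolding regular_simplex_def by blast
  have bb: "b k \<bullet> b k = 1" for k
    using spherical_simplexD(1)[OF ss, of k] by (simp add: power2_norm_eq_inner[symmetric])
  have "c \<noteq> 1"
  proof
    assume "c = 1"
    then have "(b i - b j) \<bullet> (b i - b j) = 0"
      unfolding c_def by (simp add: inner_diff_left inner_diff_right inner_commute bb)
    then show False
      using \<open>i \<noteq> j\<close> inj_eq[OF spherical_simplexD(2)[OF ss]] by simp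
  qed
  have "\<gamma> = l k + c * (sum l UNIV - l k)" for k
  proof -
    have "\<gamma> = (\<Sum>m\<in>UNIV. l m * (b m \<bullet> b k))"
      using C[of k] unfolding rep by (simp add: inner_sum_left)
    also have "\<dots> = l k * (b k \<bullet> b k) + (\<Sum>m\<in>UNIV - {k}. l m * c)"
      using regular_simplex_inner_eq[OF reg _ \<open>i \<noteq> j\<close>] unfolding c_def
      by (subst sum.remove[of UNIV k]) (auto intro!: sum.cong)
    also have "\<dots> = l k + c * (sum l UNIV - l k)"
      by (simp add: bb sum_distrib_left[symmetric] sum_diff1 mult.commute)
    finally show ?thesis .
  qed
  from this[of i] this[of j] have "l i * (1 - c) = l j * (1 - c)"
    by (simp add: algebra_simps)
  with \<open>c \<noteq> 1\<close> show ?thesis by simp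
qed simp

lemma regular_simplex_equiangular_coeffs_sum:
  fixes b :: "'n::finite \<Rightarrow> real^'n"
  assumes "regular_simplex b" "\<And>j. C \<bullet> b j = \<gamma>" "C = (\<Sum>j\<in>UNIV. l j *\<^sub>R b j)"
  shows "sum l UNIV = real CARD('n) * l i"
proof -
  have "sum l UNIV = (\<Sum>j\<in>(UNIV :: 'n set). l i)"
    using regular_simplex_equiangular_coeffs_eq[OF assms] by (intro sum.cong) auto
  then show ?thesis by simp
qed

lemma exists_ge_average:
  fixes f :: "'i::finite \<Rightarrow> real"
  obtains k where "sum f UNIV \<le> real CARD('i) * f k"
proof -
  have "Max (range f) \<in> range f"
    by (rule Max_in) auto
  then obtain k where "f k = Max (range f)"
    by (metis imageE)
  then have "sum f UNIV \<le> real CARD('i) * f k"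
    using sum_bounded_above[of UNIV f "f k"] by simp
  then show thesis by (rule that)
qed

theorem lemma3p5:
  fixes a b :: "'n::finite \<Rightarrow> real^'n"
  assumes "CARD('n) \<ge> 2"
    and "spherical_simplex a" and "vertices_on_circumsphere a"
    and "regular_simplex b" and "vertices_on_circumsphere b"
    and "circumradius (sco b UNIV) = circumradius (sco a UNIV)"
    and "cos (circumradius (sco a UNIV)) < 1 / sqrt (real CARD('n))"
  shows "vertex_diameter b \<le> vertex_diameter a"
proof -
  define \<gamma> where "\<gamma> = cos (circumradius (sco a UNIV))"
  have ssb: "spherical_simplex b"
    using assms(4) unfolding regular_simplex_def by blast
  have "0 < \<gamma>"
    unfolding \<gamma>_def by (rule cos_circumradius_pos[OF assms(2,3)])
  have "1 / sqrt (real CARD('n)) \<le> 1"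
    using assms(1) by simp
  with assms(7) have "\<gamma> < 1"
    unfolding \<gamma>_def by linarith
  obtain la where la: "\<gamma> * sum la UNIV = 1" "\<And>i. sangle (a i) (opp_point a i) = opp_angle \<gamma> (la i)"
    using circumcenter_coordinates[OF assms(2,3)] \<open>\<gamma> < 1\<close> unfolding \<gamma>_def by metis
  obtain lb where lb: "circumcenter (sco b UNIV) = (\<Sum>j\<in>UNIV. lb j *\<^sub>R b j)" "\<gamma> * sum lb UNIV = 1"
    "\<And>i. sangle (b i) (opp_point b i) = opp_angle \<gamma> (lb i)"
    using circumcenter_coordinates[OF ssb assms(5)] \<open>\<gamma> < 1\<close> assms(6) unfolding \<gamma>_def by metis
  obtain k where k: "sum la UNIV \<le> real CARD('n) * la k"
    by (rule exists_ge_average)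
  have "sum la UNIV = 1 / \<gamma>" "sum lb UNIV = 1 / \<gamma>"
    using la(1) lb(2) \<open>0 < \<gamma>\<close> by (simp_all add: field_simps mult.commute)
  moreover have "sum lb UNIV = real CARD('n) * lb i" for i
    by (rule regular_simplex_equiangular_coeffs_sum[OF assms(4)
          circumcenter_inner_vertex[OF ssb assms(5)] lb(1)])
  ultimately have "real CARD('n) * lb i \<le> real CARD('n) * la k" for i
    using k by simp
  then have "lb i \<le> la k" for i
    by (simp add: mult_le_cancel_left_pos)
  then have "sangle (b i) (opp_point b i) \<le> sangle (a k) (opp_point a k)" for i
    using \<open>0 < \<gamma>\<close> \<open>\<gamma> < 1\<close> by (simp add: la(2) lb(3) opp_angle_mono power_less_one_iff)
  then show ?thesis
    unfolding vertex_diameter_def by (intro Max.boundedI order_trans[OF _ Max_ge]) auto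
qed

end
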